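(* Let $\mathbf{L}=\mathbf{B}+\mathbb{N}(\mathbf{F})\subseteq\mathbb{N}^n$ with $\mathbf{B},\mathbf{F}$ finite, such that $\mathbf{b}-\mathbf{b}'\in\mathbb{Z}(\mathbf{F})$ for all $\mathbf{b},\mathbf{b}'\in\mathbf{B}$ (a representation witnessing that $\mathbf{L}$ is directed hybridlinear). Then $\mathrm{Pumps}(\mathbf{L})=\mathbb{Q}_{\ge0}(\mathbf{F})\cap\mathbb{Z}(\mathbf{F})$.
   Context: $\mathbb{S}(\mathbf{F})=\{\sum_{i=1}^m\lambda_i\mathbf{f}_i\mid m\in\mathbb{N},\mathbf{f}_i\in\mathbf{F},\lambda_i\in\mathbb{S}\}$ for $\mathbb{S}\in\{\mathbb{N},\mathbb{Z},\mathbb{Q}_{\ge0}\}$. For $\mathbf{X}\subseteq\mathbb{N}^n$, a vector $\mathbf{v}\in\mathbb{N}^n$ is a pump of $\mathbf{X}$ if there is a point $\mathbf{x}$ with $\mathbf{x}+\mathbb{N}\mathbf{v}\subseteq\mathbf{X}$; $\mathrm{Pumps}(\mathbf{X})$ is the set of all pumps. *)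

theory Defs
  imports Complex_Main
begin

text \<open>Vectors in dimension n are functions from a finite index type 'n.
  S(F): all finite combinations sum_{i<m} c_i f_i with f_i in F and c_i in S.\<close>

definition combs :: "'a::comm_semiring_1 set \<Rightarrow> ('n \<Rightarrow> 'a) set \<Rightarrow> ('n \<Rightarrow> 'a) set" where
  "combs S F = {v. \<exists>(m::nat) f c. (\<forall>i<m. f i \<in> F \<and> c i \<in> S) \<and>
                     v = (\<lambda>j. \<Sum>i<m. c i * f i j)}"

definition embed :: "('n \<Rightarrow> nat) \<Rightarrow> ('n \<Rightarrow> 'a::semiring_1)" where
  "embed v = (\<lambda>j. of_nat (v j))"

definition NComb :: "('n \<Rightarrow> nat) set \<Rightarrow> ('n \<Rightarrow> nat) set" where
  "NComb F = combs UNIV F"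

definition ZComb :: "('n \<Rightarrow> nat) set \<Rightarrow> ('n \<Rightarrow> int) set" where
  "ZComb F = combs UNIV (embed ` F)"

definition QComb :: "('n \<Rightarrow> nat) set \<Rightarrow> ('n \<Rightarrow> rat) set" where
  "QComb F = combs {q. q \<ge> 0} (embed ` F)"

definition Pumps :: "('n \<Rightarrow> nat) set \<Rightarrow> ('n \<Rightarrow> nat) set" where
  "Pumps X = {v. \<exists>x. \<forall>k::nat. (\<lambda>j. x j + k * v j) \<in> X}"

end

theory Submission
  imports Defs "HOL-Library.Ramsey"
begin

(* Let v be a pump of L, i.e. x + k v = b_k + u_k with b_k in B and u_k in N(F) for all k.
   Comparing k = 0 and k = 1 puts v in Z(F), because b_1 - b_0 lies in Z(F).  By the pigeonhole
   principle and Dickson's lemma there are i < j with b_i = b_j and with the coefficients of u_i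
   below those of u_j, so (j - i) v lies in N(F) and hence v in Q>=0(F).
   Conversely, clearing denominators turns v in Q>=0(F) into d v in N(F) for some d > 0.  If
   moreover v = sum c_f f with integers c_f, then x = sum d |c_f| f satisfies x + r v in N(F)
   for all r <= d, and writing k = r + t d gives x + k v in N(F) for every k; adding a base
   point of B yields a pump of L. *)

lemma sum_in_add_closed:
  assumes "finite A" "0 \<in> S" "\<forall>a\<in>S. \<forall>b\<in>S. a + b \<in> S" "\<forall>x\<in>A. g x \<in> S"
  shows "sum g A \<in> S"
  using assms by (induction A rule: finite_induct) auto

lemma not_strictly_decreasing_on_infinite:
  fixes h :: "nat \<Rightarrow> nat"
  assumes "infinite Y"
  shows "\<not> (\<forall>i\<in>Y. \<forall>j\<in>Y. i < j \<longrightarrow> h j < h i)"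
proof
  assume dec: "\<forall>i\<in>Y. \<forall>j\<in>Y. i < j \<longrightarrow> h j < h i"
  obtain y where "y \<in> Y"
    using assms by (metis finite.emptyI ex_in_conv)
  then obtain i where i: "i \<in> Y" "\<And>k. k \<in> Y \<Longrightarrow> h i \<le> h k"
    using ex_has_least_nat[of "\<lambda>k. k \<in> Y" y h] by blast
  obtain j where "j \<in> Y" "i < j"
    using assms unfolding infinite_nat_iff_unbounded by blast
  then show False
    using dec i by (meson leD)
qed

lemma infinite_pointwise_monotone_subset:
  fixes \<mu> :: "nat \<Rightarrow> 'b \<Rightarrow> nat"
  assumes "finite G" and "infinite Z"
  shows "\<exists>Y\<subseteq>Z. infinite Y \<and> (\<forall>i\<in>Y. \<forall>j\<in>Y. i < j \<longrightarrow> (\<forall>g\<in>G. \<mu> i g \<le> \<mu> j g))"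
  using assms(1)
proof (induction G rule: finite_induct)
  case empty
  then show ?case
    using assms(2) by blast
next
  case (insert g G)
  then obtain Y where Y: "Y \<subseteq> Z" "infinite Y"
    "\<forall>i\<in>Y. \<forall>j\<in>Y. i < j \<longrightarrow> (\<forall>g\<in>G. \<mu> i g \<le> \<mu> j g)"
    by blast
  \<comment> \<open>A homogeneous set of colour 1 would carry a strictly decreasing sequence.\<close>
  define col where "col X = (if \<mu> (Min X) g \<le> \<mu> (Max X) g then 0 else 1 :: nat)" for X
  have col: "col {i, j} = (if \<mu> i g \<le> \<mu> j g then 0 else 1)" if "i < j" for i j
    using that unfolding col_def by (simp add: min_def max_def)
  have col_range: "\<forall>i\<in>Y. \<forall>j\<in>Y. i \<noteq> j \<longrightarrow> col {i, j} < 2"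
    unfolding col_def by simp
  obtain Y' t where Y': "Y' \<subseteq> Y" "infinite Y'"
    and hom: "\<forall>i\<in>Y'. \<forall>j\<in>Y'. i \<noteq> j \<longrightarrow> col {i, j} = t"
    using Ramsey2[OF Y(2) col_range] by blast
  have hom_less: "col {i, j} = t" if "i \<in> Y'" "j \<in> Y'" "i < j" for i j
    using hom that less_imp_neq by blast
  have "t = 0"
  proof (rule ccontr)
    assume "t \<noteq> 0"
    have "\<mu> j g < \<mu> i g" if "i \<in> Y'" "j \<in> Y'" "i < j" for i j
      using col[OF that(3)] hom_less[OF that] \<open>t \<noteq> 0\<close> by (auto split: if_splits)
    with not_strictly_decreasing_on_infinite[OF Y'(2), of "\<lambda>k. \<mu> k g"] show False
      by blast
  qed
  then have "\<mu> i g \<le> \<mu> j g" if "i \<in> Y'" "j \<in> Y'" "i < j" for i j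
    using col[OF that(3)] hom_less[OF that] by (auto split: if_splits)
  then show ?case
    using Y Y' by (intro exI[of _ Y']) blast
qed

lemma mem_combs_iff_sum:
  fixes F :: "('n \<Rightarrow> 'a::comm_semiring_1) set"
  assumes fin: "finite F" and zero: "0 \<in> S"
    and add: "\<forall>a\<in>S. \<forall>b\<in>S. a + b \<in> S"
  shows "v \<in> combs S F \<longleftrightarrow> (\<exists>\<mu>. (\<forall>f\<in>F. \<mu> f \<in> S) \<and> v = (\<lambda>j. \<Sum>f\<in>F. \<mu> f * f j))"
proof
  assume "v \<in> combs S F"
  then obtain m :: nat and g c where gc: "\<forall>i<m. g i \<in> F \<and> c i \<in> S"
    and v: "v = (\<lambda>j. \<Sum>i<m. c i * g i j)"
    unfolding combs_def by blast
  define \<mu> where "\<mu> f = sum c {i. i \<in> {..<m} \<and> g i = f}" for f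
  have "\<forall>f\<in>F. \<mu> f \<in> S"
    unfolding \<mu>_def by (intro ballI sum_in_add_closed[OF _ zero add]) (use gc in auto)
  moreover have "v j = (\<Sum>f\<in>F. \<mu> f * f j)" for j
  proof -
    have "v j = (\<Sum>f\<in>F. \<Sum>i\<in>{i. i \<in> {..<m} \<and> g i = f}. c i * g i j)"
      unfolding v by (rule sum.group[symmetric]) (use fin gc in auto)
    then show ?thesis
      unfolding \<mu>_def sum_distrib_right by simp
  qed
  ultimately show "\<exists>\<mu>. (\<forall>f\<in>F. \<mu> f \<in> S) \<and> v = (\<lambda>j. \<Sum>f\<in>F. \<mu> f * f j)" by blast
next
  assume "\<exists>\<mu>. (\<forall>f\<in>F. \<mu> f \<in> S) \<and> v = (\<lambda>j. \<Sum>f\<in>F. \<mu> f * f j)"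
  then obtain \<mu> where \<mu>: "\<forall>f\<in>F. \<mu> f \<in> S" and v: "v = (\<lambda>j. \<Sum>f\<in>F. \<mu> f * f j)" by blast
  obtain h where h: "bij_betw h {..<card F} F"
    using ex_bij_betw_nat_finite[OF fin] lessThan_atLeast0 by metis
  have "v = (\<lambda>j. \<Sum>i<card F. \<mu> (h i) * h i j)"
    unfolding v by (rule ext, rule sum.reindex_bij_betw[OF h, symmetric])
  moreover have "\<forall>i<card F. h i \<in> F \<and> \<mu> (h i) \<in> S"
    using h \<mu> by (auto simp: bij_betw_def)
  ultimately show "v \<in> combs S F"
    unfolding combs_def
    by (intro CollectI exI[of _ "card F"] exI[of _ h] exI[of _ "\<mu> \<circ> h"]) auto
qed

lemma mem_combs_embed_iff:
  fixes F :: "('n \<Rightarrow> nat) set" and S :: "'a::{semiring_char_0,comm_semiring_1} set"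
  assumes "finite F" "0 \<in> S" "\<forall>a\<in>S. \<forall>b\<in>S. a + b \<in> S"
  shows "v \<in> combs S (embed ` F) \<longleftrightarrow>
         (\<exists>\<mu>. (\<forall>f\<in>F. \<mu> f \<in> S) \<and> v = (\<lambda>j. \<Sum>f\<in>F. \<mu> f * of_nat (f j)))"
proof -
  have inj: "inj (embed :: ('n \<Rightarrow> nat) \<Rightarrow> 'n \<Rightarrow> 'a)"
    unfolding embed_def inj_def by (auto simp: fun_eq_iff)
  then obtain unembed where unembed: "\<And>f. unembed (embed f :: 'n \<Rightarrow> 'a) = f"
    by (metis inv_f_f)
  have reindex: "(\<Sum>g\<in>embed ` F. \<mu> g * g j) = (\<Sum>f\<in>F. \<mu> (embed f) * of_nat (f j))"
    for \<mu> :: "('n \<Rightarrow> 'a) \<Rightarrow> 'a" and j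
    by (subst sum.reindex[OF inj_on_subset[OF inj subset_UNIV]]) (simp add: embed_def)
  have "v \<in> combs S (embed ` F) \<longleftrightarrow>
        (\<exists>\<mu>. (\<forall>g\<in>embed ` F. \<mu> g \<in> S) \<and> v = (\<lambda>j. \<Sum>g\<in>embed ` F. \<mu> g * g j))"
    using assms by (intro mem_combs_iff_sum) auto
  also have "\<dots> \<longleftrightarrow> (\<exists>\<mu>. (\<forall>f\<in>F. \<mu> f \<in> S) \<and> v = (\<lambda>j. \<Sum>f\<in>F. \<mu> f * of_nat (f j)))"
    unfolding reindex
  proof (intro iffI; elim exE conjE)
    fix \<mu>
    assume "\<forall>g\<in>embed ` F :: ('n \<Rightarrow> 'a) set. \<mu> g \<in> S"
      and "v = (\<lambda>j. \<Sum>f\<in>F. \<mu> (embed f) * of_nat (f j))"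
    then show "\<exists>\<mu>. (\<forall>f\<in>F. \<mu> f \<in> S) \<and> v = (\<lambda>j. \<Sum>f\<in>F. \<mu> f * of_nat (f j))"
      by (intro exI[of _ "\<mu> \<circ> embed"]) auto
  next
    fix \<mu> assume \<mu>: "\<forall>f\<in>F. \<mu> f \<in> S" "v = (\<lambda>j. \<Sum>f\<in>F. \<mu> f * of_nat (f j))"
    show "\<exists>\<mu>. (\<forall>g\<in>embed ` F :: ('n \<Rightarrow> 'a) set. \<mu> g \<in> S) \<and>
               v = (\<lambda>j. \<Sum>f\<in>F. \<mu> (embed f) * of_nat (f j))"
      by (rule exI[of _ "\<mu> \<circ> unembed"]) (use \<mu> in \<open>simp add: unembed\<close>)
  qed
  finally show ?thesis .
qed

lemma NComb_iff:
  assumes "finite F"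
  shows "u \<in> NComb F \<longleftrightarrow> (\<exists>\<mu>. u = (\<lambda>j. \<Sum>f\<in>F. \<mu> f * f j))"
  unfolding NComb_def using mem_combs_iff_sum[OF assms, of UNIV u] by simp

lemma ZComb_iff:
  assumes "finite F"
  shows "z \<in> ZComb F \<longleftrightarrow> (\<exists>\<mu>. z = (\<lambda>j. \<Sum>f\<in>F. \<mu> f * int (f j)))"
  unfolding ZComb_def using mem_combs_embed_iff[OF assms, of UNIV z] by simp

lemma QComb_iff:
  assumes "finite F"
  shows "q \<in> QComb F \<longleftrightarrow>
         (\<exists>\<mu>. (\<forall>f\<in>F. \<mu> f \<ge> 0) \<and> q = (\<lambda>j. \<Sum>f\<in>F. \<mu> f * of_nat (f j)))"
  unfolding QComb_def using mem_combs_embed_iff[OF assms, of "{q. q \<ge> 0}" q] by simp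

lemma QComb_nonneg: "finite F \<Longrightarrow> q \<in> QComb F \<Longrightarrow> 0 \<le> q j"
  unfolding QComb_iff by (auto intro: sum_nonneg)

lemma NComb_add:
  assumes "finite F" "u \<in> NComb F" "w \<in> NComb F"
  shows "(\<lambda>j. u j + w j) \<in> NComb F"
proof -
  obtain \<mu> \<nu> where "u = (\<lambda>j. \<Sum>f\<in>F. \<mu> f * f j)" "w = (\<lambda>j. \<Sum>f\<in>F. \<nu> f * f j)"
    using assms unfolding NComb_iff[OF assms(1)] by blast
  then have "(\<lambda>j. u j + w j) = (\<lambda>j. \<Sum>f\<in>F. (\<mu> f + \<nu> f) * f j)"
    by (simp add: sum.distrib add_mult_distrib)
  then show ?thesis
    unfolding NComb_iff[OF assms(1)] by (rule exI[of _ "\<lambda>f. \<mu> f + \<nu> f"])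
qed

lemma NComb_mult:
  assumes "finite F" "u \<in> NComb F"
  shows "(\<lambda>j. t * u j) \<in> NComb F"
proof -
  obtain \<mu> where "u = (\<lambda>j. \<Sum>f\<in>F. \<mu> f * f j)"
    using assms unfolding NComb_iff[OF assms(1)] by blast
  then have "(\<lambda>j. t * u j) = (\<lambda>j. \<Sum>f\<in>F. (t * \<mu> f) * f j)"
    by (simp add: sum_distrib_left mult.assoc)
  then show ?thesis
    unfolding NComb_iff[OF assms(1)] by (rule exI[of _ "\<lambda>f. t * \<mu> f"])
qed

lemma common_denominator:
  fixes q :: "'a \<Rightarrow> rat"
  assumes "finite A"
  shows "\<exists>d::nat. d > 0 \<and> (\<forall>x\<in>A. q x * of_nat d \<in> \<int>)"
  using assms
proof (induction A rule: finite_induct)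
  case empty
  show ?case by (intro exI[of _ 1]) simp
next
  case (insert x A)
  then obtain d :: nat where d: "d > 0" "\<forall>y\<in>A. q y * of_nat d \<in> \<int>" by blast
  obtain a b where ab: "quotient_of (q x) = (a, b)" by fastforce
  have "b > 0" using quotient_of_denom_pos[OF ab] .
  have "q x * of_int b \<in> \<int>"
    using quotient_of_div[OF ab] \<open>b > 0\<close> by simp
  moreover have "q x * of_nat (d * nat b) = q x * of_int b * of_nat d"
    using \<open>b > 0\<close> by (simp add: mult_ac)
  ultimately have "q x * of_nat (d * nat b) \<in> \<int>"
    by (metis Ints_mult Ints_of_nat)
  moreover have "q y * of_nat (d * nat b) \<in> \<int>" if "y \<in> A" for y
    using d(2) that \<open>b > 0\<close> by (metis Ints_mult Ints_of_nat mult.assoc of_nat_mult)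
  ultimately show ?case
    using d(1) \<open>b > 0\<close> by (intro exI[of _ "d * nat b"]) simp
qed

lemma of_nat_in_QComb_iff:
  assumes fin: "finite F"
  shows "(\<lambda>j. rat_of_nat (v j)) \<in> QComb F \<longleftrightarrow> (\<exists>d>0. (\<lambda>j. d * v j) \<in> NComb F)"
proof
  assume "(\<lambda>j. rat_of_nat (v j)) \<in> QComb F"
  then obtain q where q: "\<forall>f\<in>F. q f \<ge> 0"
    and v: "(\<lambda>j. rat_of_nat (v j)) = (\<lambda>j. \<Sum>f\<in>F. q f * of_nat (f j))"
    unfolding QComb_iff[OF fin] by blast
  obtain d :: nat where d: "d > 0" "\<forall>f\<in>F. q f * of_nat d \<in> \<int>"
    using common_denominator[OF fin] by blast
  have "\<forall>f\<in>F. \<exists>n. q f * of_nat d = of_nat n"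
  proof
    fix f assume "f \<in> F"
    then have "q f * of_nat d \<in> \<nat>"
      using d(2) q by (simp add: Nats_altdef2)
    then show "\<exists>n. q f * of_nat d = of_nat n"
      by (auto elim!: Nats_cases)
  qed
  then obtain n where n: "\<forall>f\<in>F. q f * of_nat d = of_nat (n f)"
    by (rule bchoice[THEN exE])
  have "d * v j = (\<Sum>f\<in>F. n f * f j)" for j
  proof -
    have "rat_of_nat (d * v j) = (\<Sum>f\<in>F. (q f * of_nat d) * of_nat (f j))"
      using fun_cong[OF v, of j] by (simp add: sum_distrib_left mult_ac)
    also have "\<dots> = rat_of_nat (\<Sum>f\<in>F. n f * f j)"
      using n by simp
    finally show ?thesis
      by (simp only: of_nat_eq_iff)
  qed
  then show "\<exists>d>0. (\<lambda>j. d * v j) \<in> NComb F"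
    using d(1) unfolding NComb_iff[OF fin] by blast
next
  assume "\<exists>d>0. (\<lambda>j. d * v j) \<in> NComb F"
  then obtain d \<mu> where d: "d > 0" and dv: "(\<lambda>j. d * v j) = (\<lambda>j. \<Sum>f\<in>F. \<mu> f * f j)"
    unfolding NComb_iff[OF fin] by blast
  have "rat_of_nat (v j) = (\<Sum>f\<in>F. of_nat (\<mu> f) / of_nat d * of_nat (f j))" for j
  proof -
    have dvj: "of_nat d * rat_of_nat (v j) = (\<Sum>f\<in>F. of_nat (\<mu> f) * of_nat (f j))"
      using arg_cong[OF fun_cong[OF dv, of j], of rat_of_nat] by simp
    have "rat_of_nat (v j) = of_nat d * rat_of_nat (v j) / of_nat d"
      using d by simp
    also have "\<dots> = (\<Sum>f\<in>F. of_nat (\<mu> f) * of_nat (f j)) / of_nat d"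
      by (simp only: dvj)
    also have "\<dots> = (\<Sum>f\<in>F. of_nat (\<mu> f) / of_nat d * of_nat (f j))"
      by (simp add: sum_divide_distrib)
    finally show ?thesis .
  qed
  then show "(\<lambda>j. rat_of_nat (v j)) \<in> QComb F"
    unfolding QComb_iff[OF fin]
    by (intro exI[of _ "\<lambda>f. of_nat (\<mu> f) / of_nat d"]) auto
qed

lemma Pumps_translate:
  assumes "\<And>u. u \<in> X \<Longrightarrow> (\<lambda>j. b j + u j) \<in> Y"
  shows "Pumps X \<subseteq> Pumps Y"
proof
  fix v assume "v \<in> Pumps X"
  then obtain x where x: "\<And>k::nat. (\<lambda>j. x j + k * v j) \<in> X"
    unfolding Pumps_def by blast
  have "(\<lambda>j. (b j + x j) + k * v j) \<in> Y" for k :: nat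
    using assms[OF x[of k]] by (simp add: add.assoc)
  then show "v \<in> Pumps Y"
    unfolding Pumps_def by (auto intro!: exI[of _ "\<lambda>j. b j + x j"])
qed

lemma ZComb_shift_into_NComb:
  assumes fin: "finite F" and "embed v \<in> ZComb F"
  shows "\<exists>x. \<forall>r\<le>D. (\<lambda>j. x j + r * v j) \<in> NComb F"
proof -
  obtain c where c: "(\<lambda>j. int (v j)) = (\<lambda>j. \<Sum>f\<in>F. c f * int (f j))"
    using assms(2) unfolding ZComb_iff[OF fin] embed_def by blast
  define x where "x j = (\<Sum>f\<in>F. (D * nat \<bar>c f\<bar>) * f j)" for j
  have "(\<lambda>j. x j + r * v j) \<in> NComb F" if "r \<le> D" for r
  proof -
    \<comment> \<open>The shift x absorbs the negative coefficients of r v as long as r does not exceed D.\<close>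
    define \<mu> where "\<mu> f = int D * \<bar>c f\<bar> + int r * c f" for f
    have \<mu>_nonneg: "\<mu> f \<ge> 0" for f
    proof -
      have "- (int r * c f) \<le> int r * \<bar>c f\<bar>"
        by (metis abs_ge_minus_self mult_left_mono mult_minus_right of_nat_0_le_iff)
      also have "\<dots> \<le> int D * \<bar>c f\<bar>"
        using that by (simp add: mult_right_mono)
      finally show ?thesis
        unfolding \<mu>_def by linarith
    qed
    have "int (x j + r * v j) =
          (\<Sum>f\<in>F. int D * \<bar>c f\<bar> * int (f j)) + int r * (\<Sum>f\<in>F. c f * int (f j))" for j
      using fun_cong[OF c, of j] unfolding x_def by simp
    also have "\<dots> j = (\<Sum>f\<in>F. \<mu> f * int (f j))" for j
      unfolding \<mu>_def by (simp add: sum.distrib sum_distrib_left distrib_right mult.assoc)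
    also have "\<dots> j = int (\<Sum>f\<in>F. nat (\<mu> f) * f j)" for j
      using \<mu>_nonneg by simp
    finally have "(\<lambda>j. x j + r * v j) = (\<lambda>j. \<Sum>f\<in>F. nat (\<mu> f) * f j)"
      by (simp only: of_nat_eq_iff)
    then show ?thesis
      unfolding NComb_iff[OF fin] by (rule exI[of _ "\<lambda>f. nat (\<mu> f)"])
  qed
  then show ?thesis by blast
qed

lemma mem_Pumps_NComb_if_multiple:
  assumes fin: "finite F" and "embed v \<in> ZComb F"
    and "d > 0" and dv: "(\<lambda>j. d * v j) \<in> NComb F"
  shows "v \<in> Pumps (NComb F)"
proof -
  obtain x where x: "\<And>r. r \<le> d \<Longrightarrow> (\<lambda>j. x j + r * v j) \<in> NComb F"
    using ZComb_shift_into_NComb[OF assms(1,2)] by blast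
  have "(\<lambda>j. x j + k * v j) \<in> NComb F" for k :: nat
  proof -
    have "k * v j = k mod d * v j + k div d * (d * v j)" for j
    proof -
      have "k * v j = (k mod d + k div d * d) * v j"
        by simp
      also have "\<dots> = k mod d * v j + k div d * (d * v j)"
        by (simp only: add_mult_distrib mult.assoc)
      finally show ?thesis .
    qed
    moreover have "(\<lambda>j. x j + k mod d * v j) \<in> NComb F"
      using x[of "k mod d"] mod_less_divisor[OF \<open>d > 0\<close>, of k] by simp
    then have "(\<lambda>j. (x j + k mod d * v j) + k div d * (d * v j)) \<in> NComb F"
      by (rule NComb_add[OF fin _ NComb_mult[OF fin dv]])
    ultimately show ?thesis
      by (simp add: add.assoc)
  qed
  then show ?thesis
    unfolding Pumps_def by blast
qed

lemma pump_orbit_decomposition: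
  assumes fin: "finite F"
    and L: "L = {(\<lambda>j. b j + u j) | b u. b \<in> B \<and> u \<in> NComb F}"
    and v: "v \<in> Pumps L"
  obtains x bb mm where "\<And>k j. x j + k * v j = bb k j + (\<Sum>f\<in>F. mm k f * f j)"
    and "\<And>k. bb k \<in> B"
proof -
  obtain x where x: "\<And>k::nat. (\<lambda>j. x j + k * v j) \<in> L"
    using v unfolding Pumps_def by blast
  have "\<exists>b \<mu>. b \<in> B \<and> (\<forall>j. x j + k * v j = b j + (\<Sum>f\<in>F. \<mu> f * f j))" for k
  proof -
    obtain b u where "b \<in> B" "u \<in> NComb F" "(\<lambda>j. x j + k * v j) = (\<lambda>j. b j + u j)"
      using x[of k] unfolding L by blast
    moreover obtain \<mu> where "u = (\<lambda>j. \<Sum>f\<in>F. \<mu> f * f j)"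
      using calculation(2) unfolding NComb_iff[OF fin] by blast
    ultimately show ?thesis
      by (auto simp: fun_eq_iff)
  qed
  then obtain bb where "\<forall>k. \<exists>\<mu>. bb k \<in> B \<and> (\<forall>j. x j + k * v j = bb k j + (\<Sum>f\<in>F. \<mu> f * f j))"
    using choice[of "\<lambda>k b. \<exists>\<mu>. b \<in> B \<and> (\<forall>j. x j + k * v j = b j + (\<Sum>f\<in>F. \<mu> f * f j))"] by blast
  then obtain mm where "\<forall>k. bb k \<in> B \<and> (\<forall>j. x j + k * v j = bb k j + (\<Sum>f\<in>F. mm k f * f j))"
    using choice[of "\<lambda>k \<mu>. bb k \<in> B \<and> (\<forall>j. x j + k * v j = bb k j + (\<Sum>f\<in>F. \<mu> f * f j))"] by blast
  then show ?thesis
    using that by blast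
qed

lemma pump_in_ZComb:
  assumes fin: "finite F"
    and L: "L = {(\<lambda>j. b j + u j) | b u. b \<in> B \<and> u \<in> NComb F}"
    and diff: "\<forall>b\<in>B. \<forall>b'\<in>B. (\<lambda>j. int (b j) - int (b' j)) \<in> ZComb F"
    and v: "v \<in> Pumps L"
  shows "embed v \<in> ZComb F"
proof -
  obtain x bb mm where orbit: "\<And>k j. x j + k * v j = bb k j + (\<Sum>f\<in>F. mm k f * f j)"
    and bb: "\<And>k. bb k \<in> B"
    by (rule pump_orbit_decomposition[OF fin L v]) blast
  have "(\<lambda>j. int (bb 1 j) - int (bb 0 j)) \<in> ZComb F"
    using diff bb by blast
  then obtain c where c: "(\<lambda>j. int (bb 1 j) - int (bb 0 j)) = (\<lambda>j. \<Sum>f\<in>F. c f * int (f j))"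
    unfolding ZComb_iff[OF fin] by blast
  have "int (v j) = (\<Sum>f\<in>F. (c f + int (mm 1 f) - int (mm 0 f)) * int (f j))" for j
  proof -
    have "int (x j) = int (bb 0 j) + (\<Sum>f\<in>F. int (mm 0 f) * int (f j))"
      using arg_cong[OF orbit[where k = 0 and j = j], of int] by simp
    moreover have "int (x j) + int (v j) = int (bb 1 j) + (\<Sum>f\<in>F. int (mm 1 f) * int (f j))"
      using arg_cong[OF orbit[where k = 1 and j = j], of int] by simp
    moreover have "(\<Sum>f\<in>F. (c f + int (mm 1 f) - int (mm 0 f)) * int (f j)) =
          (\<Sum>f\<in>F. c f * int (f j)) + (\<Sum>f\<in>F. int (mm 1 f) * int (f j))
          - (\<Sum>f\<in>F. int (mm 0 f) * int (f j))"
      by (simp add: algebra_simps sum.distrib sum_subtractf)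
    ultimately show ?thesis
      using fun_cong[OF c, of j] by linarith
  qed
  then show ?thesis
    unfolding ZComb_iff[OF fin] embed_def
    by (intro exI[of _ "\<lambda>f. c f + int (mm 1 f) - int (mm 0 f)"]) simp
qed

lemma pump_multiple_in_NComb:
  assumes finB: "finite B" and finF: "finite F"
    and L: "L = {(\<lambda>j. b j + u j) | b u. b \<in> B \<and> u \<in> NComb F}"
    and v: "v \<in> Pumps L"
  shows "\<exists>d>0. (\<lambda>j. d * v j) \<in> NComb F"
proof -
  obtain x bb mm where orbit: "\<And>k j. x j + k * v j = bb k j + (\<Sum>f\<in>F. mm k f * f j)"
    and bb: "\<And>k. bb k \<in> B"
    by (rule pump_orbit_decomposition[OF finF L v]) blast
  have "range bb \<subseteq> B"
    using bb by blast
  then have "finite (range bb)"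
    using finB by (rule finite_subset)
  then obtain b where b: "infinite (bb -` {b})"
    using inf_img_fin_dom[OF _ infinite_UNIV_nat] by blast
  obtain Y where Y: "Y \<subseteq> bb -` {b}" "infinite Y"
    and mono: "\<forall>i\<in>Y. \<forall>j\<in>Y. i < j \<longrightarrow> (\<forall>f\<in>F. mm i f \<le> mm j f)"
    using infinite_pointwise_monotone_subset[OF finF b, of mm] by blast
  obtain i where i: "i \<in> Y"
    using Y(2) by (metis finite.emptyI ex_in_conv)
  obtain j where j: "j \<in> Y" "i < j"
    using Y(2) unfolding infinite_nat_iff_unbounded by blast
  have "bb j = bb i"
    using Y(1) i j by auto
  have "(j - i) * v l = (\<Sum>f\<in>F. (mm j f - mm i f) * f l)" for l
  proof -
    have "(\<Sum>f\<in>F. mm j f * f l) = (\<Sum>f\<in>F. mm i f * f l) + (\<Sum>f\<in>F. (mm j f - mm i f) * f l)"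
      unfolding sum.distrib[symmetric] using mono i j
      by (intro sum.cong) (auto simp: add_mult_distrib[symmetric])
    moreover have "j * v l = i * v l + (j - i) * v l"
      using \<open>i < j\<close> by (simp add: add_mult_distrib[symmetric])
    ultimately show ?thesis
      using orbit[where k = i and j = l] orbit[where k = j and j = l]
        fun_cong[OF \<open>bb j = bb i\<close>, of l]
      by linarith
  qed
  then have "(\<lambda>l. (j - i) * v l) \<in> NComb F"
    unfolding NComb_iff[OF finF] by (intro exI[of _ "\<lambda>f. mm j f - mm i f"] ext)
  then show ?thesis
    using \<open>i < j\<close> by (intro exI[of _ "j - i"]) simp
qed

theorem mainTheorem18:
  fixes B F :: "('n::finite \<Rightarrow> nat) set" and L :: "('n \<Rightarrow> nat) set"
  assumes "finite B" and "finite F" and "B \<noteq> {}"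
    and "L = {(\<lambda>j. b j + u j) | b u. b \<in> B \<and> u \<in> NComb F}"
    and "\<forall>b\<in>B. \<forall>b'\<in>B. (\<lambda>j. int (b j) - int (b' j)) \<in> ZComb F"
  shows "(embed ` Pumps L :: ('n \<Rightarrow> int) set) =
         {z. z \<in> ZComb F \<and> (\<lambda>j. rat_of_int (z j)) \<in> QComb F}"
proof (intro set_eqI iffI)
  fix z :: "'n \<Rightarrow> int"
  assume "z \<in> embed ` Pumps L"
  then obtain v where v: "v \<in> Pumps L" and z: "z = embed v"
    by blast
  have "(\<lambda>j. rat_of_nat (v j)) \<in> QComb F"
    using pump_multiple_in_NComb[OF assms(1,2,4) v] of_nat_in_QComb_iff[OF assms(2)] by blast
  then show "z \<in> {z. z \<in> ZComb F \<and> (\<lambda>j. rat_of_int (z j)) \<in> QComb F}"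
    using pump_in_ZComb[OF assms(2,4,5) v] by (simp add: z embed_def)
next
  fix z :: "'n \<Rightarrow> int"
  assume z: "z \<in> {z. z \<in> ZComb F \<and> (\<lambda>j. rat_of_int (z j)) \<in> QComb F}"
  define v where "v j = nat (z j)" for j
  have "0 \<le> z j" for j
    using QComb_nonneg[OF assms(2), of "\<lambda>j. rat_of_int (z j)" j] z by simp
  then have "z = embed v"
    by (simp add: embed_def v_def fun_eq_iff)
  obtain b where "b \<in> B"
    using assms(3) by blast
  then have "Pumps (NComb F) \<subseteq> Pumps L"
    using assms(4) by (intro Pumps_translate[where b = b]) blast
  moreover have "v \<in> Pumps (NComb F)"
    using z of_nat_in_QComb_iff[OF assms(2), of v] mem_Pumps_NComb_if_multiple[OF assms(2)]
    by (auto simp: \<open>z = embed v\<close> embed_def)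
  ultimately show "z \<in> embed ` Pumps L"
    using \<open>z = embed v\<close> by blast
qed

end
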